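(* Consider the system of ordinary differential equations \[ \dot u=r_{1}u(1-u)-a_{12}uv-a_{13}uw,\qquad \dot v=r_{2}v(1-v)+a_{21}uv,\qquad \dot w=-\mu w+a_{31}uw, \] with all parameters $r_1,r_2,\mu,a_{12},a_{13},a_{21},a_{31}$ positive. If $a_{31}\le\mu$, then every solution with positive initial data $u(0),v(0),w(0)>0$ satisfies $\lim_{t\to\infty}w(t)=0$. *)

theory Defs
  imports Complex_Main
begin

end

theory Submission
  imports Defs "HOL-Analysis.Analysis" "HOL-Real_Asymp.Real_Asymp"
begin

text \<open>
  Each equation has the form \<open>x' = x g\<close> with \<open>g\<close> continuous, so \<open>u, v, w\<close> stay positive.
  Since \<open>v' > 0\<close> whenever \<open>0 < v < 1\<close>, \<open>v\<close> never drops below \<open>c = min (v 0) 1\<close>; the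
  competition term \<open>a12 u v\<close> then forces \<open>u' \<le> -\<kappa> < 0\<close> whenever \<open>u\<close> exceeds a suitable
  \<open>\<theta> < 1\<close>, so \<open>u\<close> is eventually at most \<open>\<theta>\<close>. From then on \<open>a31 \<le> \<mu>\<close> gives
  \<open>w' = w (a31 u - \<mu>) \<le> - \<mu> (1 - \<theta>) w\<close>, and \<open>w\<close> decays exponentially.
\<close>

lemma diff_le_of_deriv_le:
  fixes f D :: "real \<Rightarrow> real"
  assumes "a \<le> b" "{a..b} \<subseteq> S"
    and deriv: "\<And>t. t \<in> {a..b} \<Longrightarrow> (f has_real_derivative D t) (at t within S)"
    and bound: "\<And>t. t \<in> {a<..<b} \<Longrightarrow> D t \<le> k"
  shows "f b - f a \<le> k * (b - a)"
proof (cases "a = b")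
  case False
  then have "a < b" using \<open>a \<le> b\<close> by simp
  have "\<exists>x\<in>{a<..<b}. f b - f a = D x * (b - a)"
  proof (rule mvt_simple[OF \<open>a < b\<close>])
    fix x assume "a \<le> x" "x \<le> b"
    then have "(f has_real_derivative D x) (at x within {a..b})"
      using deriv has_field_derivative_subset[OF _ \<open>{a..b} \<subseteq> S\<close>] by simp
    then show "(f has_derivative (\<lambda>h. D x * h)) (at x within {a..b})"
      by (simp add: has_field_derivative_def)
  qed
  then show ?thesis using bound \<open>a < b\<close> by (auto intro: mult_right_mono)
qed simp

lemma le_exp_of_deriv_le_mult:
  fixes f D :: "real \<Rightarrow> real"
  assumes "a \<le> b" "{a..b} \<subseteq> S"
    and deriv: "\<And>t. t \<in> {a..b} \<Longrightarrow> (f has_real_derivative D t) (at t within S)"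
    and bound: "\<And>t. t \<in> {a<..<b} \<Longrightarrow> D t \<le> k * f t"
  shows "f b \<le> f a * exp (k * (b - a))"
proof -
  define h where "h x = f x * exp (- k * (x - a))" for x
  have "(h has_real_derivative (D t - k * f t) * exp (- k * (t - a))) (at t within S)"
    if "t \<in> {a..b}" for t
    unfolding h_def using deriv[OF that]
    by (auto intro!: derivative_eq_intros simp: algebra_simps)
  moreover have "(D t - k * f t) * exp (- k * (t - a)) \<le> 0" if "t \<in> {a<..<b}" for t
    using bound[OF that] by (simp add: mult_nonpos_nonneg)
  ultimately have "h b - h a \<le> 0 * (b - a)"
    by (rule diff_le_of_deriv_le[OF assms(1,2)])
  then have "h b * exp (k * (b - a)) \<le> f a * exp (k * (b - a))"
    by (simp add: h_def)
  moreover have "h b * exp (k * (b - a)) = f b"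
    by (simp add: h_def mult.assoc flip: exp_add)
  ultimately show ?thesis by simp
qed

lemma pos_of_deriv_eq_mult:
  fixes f g :: "real \<Rightarrow> real"
  assumes "{a..} \<subseteq> S"
    and deriv: "\<And>t. a \<le> t \<Longrightarrow> (f has_real_derivative f t * g t) (at t within S)"
    and "continuous_on {a..} g" "0 < f a" "a \<le> t"
  shows "0 < f t"
proof (rule ccontr)
  assume "\<not> 0 < f t"
  have deriv': "(f has_real_derivative f x * g x) (at x within {a..b})" if "x \<in> {a..b}" for x b
    using deriv that has_field_derivative_subset[OF _ order.trans[OF _ \<open>{a..} \<subseteq> S\<close>]] by auto
  let ?K = "{a..t} \<inter> f -` {..0}"
  have "compact ?K"
    using DERIV_continuous_on[OF deriv']
    by (simp add: compact_eq_bounded_closed bounded_Int continuous_closed_preimage)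
  moreover have "t \<in> ?K" using \<open>a \<le> t\<close> \<open>\<not> 0 < f t\<close> by simp
  ultimately obtain s where s: "s \<in> ?K" and s_least: "\<And>x. x \<in> ?K \<Longrightarrow> s \<le> x"
    using compact_attains_inf[of ?K] by (metis empty_iff)
  have "s \<noteq> a" using s \<open>0 < f a\<close> by auto
  with s have "a < s" by simp
  have pos_before: "0 < f x" if "x \<in> {a..<s}" for x
  proof (rule ccontr)
    assume "\<not> 0 < f x"
    then have "x \<in> ?K" using that s by auto
    then show False using s_least[of x] that by simp
  qed
  have "continuous_on {a..s} g"
    using \<open>continuous_on {a..} g\<close> by (rule continuous_on_subset) auto
  from continuous_attains_inf[OF compact_Icc _ this]
  obtain m where m: "\<And>x. x \<in> {a..s} \<Longrightarrow> m \<le> g x"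
    using \<open>a < s\<close> by fastforce
  \<comment> \<open>on \<open>[a, s)\<close> we have \<open>f' = f g \<ge> m f\<close>, so \<open>f\<close> cannot reach \<open>0\<close> at \<open>s\<close>\<close>
  have "- f s \<le> - f a * exp (m * (s - a))"
  proof (rule le_exp_of_deriv_le_mult[OF _ order_refl])
    show "((\<lambda>x. - f x) has_real_derivative - (f x * g x)) (at x within {a..s})"
      if "x \<in> {a..s}" for x
      using deriv'[OF that] by (rule DERIV_minus)
    show "- (f x * g x) \<le> m * - f x" if "x \<in> {a<..<s}" for x
      using m[of x] pos_before[of x] that by (simp add: mult_left_mono mult.commute)
  qed (use \<open>a < s\<close> in simp)
  moreover have "0 < f a * exp (m * (s - a))" using \<open>0 < f a\<close> by simp
  ultimately show False using s by simp
qed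

lemma le_of_deriv_nonpos_above:
  fixes f D :: "real \<Rightarrow> real"
  assumes "{a..} \<subseteq> S"
    and deriv: "\<And>t. a \<le> t \<Longrightarrow> (f has_real_derivative D t) (at t within S)"
    and nonpos: "\<And>t. a \<le> t \<Longrightarrow> c < f t \<Longrightarrow> D t \<le> 0"
    and "f a \<le> c" "a \<le> t"
  shows "f t \<le> c"
proof -
  have "(f has_real_derivative D x) (at x within {a..t})" if "x \<in> {a..t}" for x
    using deriv that has_field_derivative_subset[OF _ order.trans[OF _ \<open>{a..} \<subseteq> S\<close>]] by auto
  then have "continuous_on {a..t} f" by (rule DERIV_continuous_on)
  let ?K = "{a..t} \<inter> f -` {..c}"
  have "compact ?K"
    using \<open>continuous_on {a..t} f\<close>
    by (simp add: compact_eq_bounded_closed bounded_Int continuous_closed_preimage)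
  moreover have "a \<in> ?K" using assms(4,5) by simp
  ultimately obtain s where s: "s \<in> ?K" and s_greatest: "\<And>x. x \<in> ?K \<Longrightarrow> x \<le> s"
    using compact_attains_sup[of ?K] by (metis empty_iff)
  have "f t - f s \<le> 0 * (t - s)"
  proof (rule diff_le_of_deriv_le[where S = S])
    show "D x \<le> 0" if "x \<in> {s<..<t}" for x
    proof (rule nonpos)
      show "a \<le> x" using that s by auto
      show "c < f x"
      proof (rule ccontr)
        assume "\<not> c < f x"
        then have "x \<in> ?K" using that s by auto
        then show False using s_greatest[of x] that by simp
      qed
    qed
  qed (use s assms(1) deriv in auto)
  then show ?thesis using s by simp
qed

lemma eventually_le_of_deriv_le_neg:
  fixes f D :: "real \<Rightarrow> real"
  assumes "{a..} \<subseteq> S"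
    and deriv: "\<And>t. a \<le> t \<Longrightarrow> (f has_real_derivative D t) (at t within S)"
    and decrease: "\<And>t. a \<le> t \<Longrightarrow> c < f t \<Longrightarrow> D t \<le> - \<kappa>"
    and "0 < \<kappa>"
  shows "\<forall>\<^sub>F t in at_top. f t \<le> c"
proof -
  have "\<exists>t0\<ge>a. f t0 \<le> c"
  proof (rule ccontr)
    assume "\<not> (\<exists>t0\<ge>a. f t0 \<le> c)"
    then have above: "c < f t" if "a \<le> t" for t
      using that by force
    define T where "T = a + (f a - c) / \<kappa>"
    have "a \<le> T" using above[of a] \<open>0 < \<kappa>\<close> by (simp add: T_def)
    have "f T - f a \<le> - \<kappa> * (T - a)"
      using \<open>a \<le> T\<close> assms(1) deriv decrease above
      by (intro diff_le_of_deriv_le[where S = S and D = D]) auto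
    then have "f T \<le> c" using \<open>0 < \<kappa>\<close> by (simp add: T_def)
    then show False using above[OF \<open>a \<le> T\<close>] by simp
  qed
  then obtain t0 where "a \<le> t0" "f t0 \<le> c" by blast
  have "f t \<le> c" if "t0 \<le> t" for t
  proof (rule le_of_deriv_nonpos_above[of t0 S f D])
    show "D t \<le> 0" if "t0 \<le> t" "c < f t" for t
      using decrease[of t] that \<open>a \<le> t0\<close> \<open>0 < \<kappa>\<close> by simp
  qed (use assms(1) deriv \<open>a \<le> t0\<close> \<open>f t0 \<le> c\<close> that in auto)
  then show ?thesis unfolding eventually_at_top_linorder by blast
qed

lemma tendsto_zero_of_deriv_le_neg_mult:
  fixes f D :: "real \<Rightarrow> real"
  assumes "{a..} \<subseteq> S"
    and deriv: "\<And>t. a \<le> t \<Longrightarrow> (f has_real_derivative D t) (at t within S)"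
    and decay: "\<And>t. a \<le> t \<Longrightarrow> D t \<le> - \<delta> * f t"
    and "0 < \<delta>"
    and nonneg: "\<And>t. a \<le> t \<Longrightarrow> 0 \<le> f t"
  shows "(f \<longlongrightarrow> 0) at_top"
proof (rule tendsto_sandwich[OF _ _ tendsto_const])
  have "f t \<le> f a * exp (- \<delta> * (t - a))" if "a \<le> t" for t
    using that assms(1) deriv decay
    by (intro le_exp_of_deriv_le_mult[where S = S and D = D]) auto
  then show "\<forall>\<^sub>F t in at_top. f t \<le> f a * exp (- \<delta> * (t - a))"
    unfolding eventually_at_top_linorder by blast
  show "\<forall>\<^sub>F t in at_top. 0 \<le> f t"
    unfolding eventually_at_top_linorder using nonneg by blast
  show "((\<lambda>t. f a * exp (- \<delta> * (t - a))) \<longlongrightarrow> 0) at_top"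
    using \<open>0 < \<delta>\<close> by real_asymp
qed

locale three_species_system =
  fixes r1 r2 \<mu> a12 a13 a21 a31 :: real
    and u v w :: "real \<Rightarrow> real"
  assumes pos: "r1 > 0" "r2 > 0" "\<mu> > 0" "a12 > 0" "a13 > 0" "a21 > 0" "a31 > 0"
    and du: "\<And>t. t \<ge> 0 \<Longrightarrow>
      (u has_real_derivative (r1 * u t * (1 - u t) - a12 * u t * v t - a13 * u t * w t)) (at t within {0..})"
    and dv: "\<And>t. t \<ge> 0 \<Longrightarrow>
      (v has_real_derivative (r2 * v t * (1 - v t) + a21 * u t * v t)) (at t within {0..})"
    and dw: "\<And>t. t \<ge> 0 \<Longrightarrow>
      (w has_real_derivative (- \<mu> * w t + a31 * u t * w t)) (at t within {0..})"
    and init: "u 0 > 0" "v 0 > 0" "w 0 > 0"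
begin

lemma continuous_on_uvw:
  "continuous_on {0..} u" "continuous_on {0..} v" "continuous_on {0..} w"
  by (rule DERIV_continuous_on, rule du dv dw, simp)+

lemma uvw_pos:
  assumes "0 \<le> t"
  shows "0 < u t" "0 < v t" "0 < w t"
proof -
  show "0 < u t"
  proof (rule pos_of_deriv_eq_mult[of 0 "{0..}" u "\<lambda>s. r1 * (1 - u s) - a12 * v s - a13 * w s"])
    show "(u has_real_derivative u s * (r1 * (1 - u s) - a12 * v s - a13 * w s)) (at s within {0..})"
      if "0 \<le> s" for s
      using du[OF that] by (simp add: algebra_simps)
    show "continuous_on {0..} (\<lambda>s. r1 * (1 - u s) - a12 * v s - a13 * w s)"
      by (intro continuous_intros continuous_on_uvw)
  qed (use assms init in auto)
  show "0 < v t"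
  proof (rule pos_of_deriv_eq_mult[of 0 "{0..}" v "\<lambda>s. r2 * (1 - v s) + a21 * u s"])
    show "(v has_real_derivative v s * (r2 * (1 - v s) + a21 * u s)) (at s within {0..})"
      if "0 \<le> s" for s
      using dv[OF that] by (simp add: algebra_simps)
    show "continuous_on {0..} (\<lambda>s. r2 * (1 - v s) + a21 * u s)"
      by (intro continuous_intros continuous_on_uvw)
  qed (use assms init in auto)
  show "0 < w t"
  proof (rule pos_of_deriv_eq_mult[of 0 "{0..}" w "\<lambda>s. a31 * u s - \<mu>"])
    show "(w has_real_derivative w s * (a31 * u s - \<mu>)) (at s within {0..})"
      if "0 \<le> s" for s
      using dw[OF that] by (simp add: algebra_simps)
    show "continuous_on {0..} (\<lambda>s. a31 * u s - \<mu>)"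
      by (intro continuous_intros continuous_on_uvw)
  qed (use assms init in auto)
qed

lemma v_ge_min:
  assumes "0 \<le> t"
  shows "min (v 0) 1 \<le> v t"
proof -
  have "- v t \<le> - min (v 0) 1"
  proof (rule le_of_deriv_nonpos_above[of 0 "{0..}" "\<lambda>s. - v s"
        "\<lambda>s. - (r2 * v s * (1 - v s) + a21 * u s * v s)"])
    show "((\<lambda>t. - v t) has_real_derivative - (r2 * v s * (1 - v s) + a21 * u s * v s))
      (at s within {0..})" if "0 \<le> s" for s
      using dv[OF that] by (rule DERIV_minus)
    show "- (r2 * v s * (1 - v s) + a21 * u s * v s) \<le> 0"
      if "0 \<le> s" "- min (v 0) 1 < - v s" for s
    proof -
      have "v s < 1" "0 < u s" "0 < v s" using that uvw_pos[OF \<open>0 \<le> s\<close>] by auto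
      then have "0 \<le> r2 * v s * (1 - v s)" "0 \<le> a21 * u s * v s" using pos by simp_all
      then show ?thesis by linarith
    qed
  qed (use assms in auto)
  then show ?thesis by simp
qed

lemma u_eventually_below: "\<exists>\<theta><1. \<forall>\<^sub>F t in at_top. u t \<le> \<theta>"
proof -
  define c where "c = min (v 0) 1"
  have "0 < c" using init by (simp add: c_def)
  \<comment> \<open>\<open>\<theta> \<ge> 1/2\<close> keeps the factor \<open>u\<close> of \<open>u'\<close> away from \<open>0\<close>;
      \<open>r1 (1 - \<theta>) \<le> a12 c / 2\<close> lets the competition term dominate\<close>
  define \<theta> where "\<theta> = max (1/2) (1 - a12 * c / (2 * r1))"
  have "\<theta> < 1" using pos \<open>0 < c\<close> by (simp add: \<theta>_def)
  have "\<forall>\<^sub>F t in at_top. u t \<le> \<theta>"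
  proof (rule eventually_le_of_deriv_le_neg[of 0 "{0..}" u _ \<theta> "a12 * c / 4"])
    fix t assume "0 \<le> t" "\<theta> < u t"
    have "r1 * (1 - u t) \<le> r1 * (1 - \<theta>)"
      using \<open>\<theta> < u t\<close> pos by simp
    also have "\<dots> \<le> r1 * (a12 * c / (2 * r1))"
      using pos by (intro mult_left_mono) (auto simp: \<theta>_def)
    finally have "r1 * (1 - u t) \<le> a12 * c / 2" using pos by simp
    moreover have "a12 * c \<le> a12 * v t"
      using v_ge_min[OF \<open>0 \<le> t\<close>] pos by (simp add: c_def)
    moreover have "0 \<le> a13 * w t" using uvw_pos[OF \<open>0 \<le> t\<close>] pos by simp
    ultimately have bracket: "r1 * (1 - u t) - a12 * v t - a13 * w t \<le> - (a12 * c / 2)"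
      by linarith
    have "u t * (r1 * (1 - u t) - a12 * v t - a13 * w t) \<le> u t * - (a12 * c / 2)"
      using bracket uvw_pos[OF \<open>0 \<le> t\<close>] by (intro mult_left_mono) auto
    also have "\<dots> \<le> 1/2 * - (a12 * c / 2)"
      using \<open>\<theta> < u t\<close> pos \<open>0 < c\<close> by (intro mult_right_mono_neg) (auto simp: \<theta>_def)
    finally show "r1 * u t * (1 - u t) - a12 * u t * v t - a13 * u t * w t \<le> - (a12 * c / 4)"
      by (simp add: algebra_simps)
  qed (use du pos \<open>0 < c\<close> in auto)
  with \<open>\<theta> < 1\<close> show ?thesis by blast
qed

end

theorem lemma3:
  fixes r1 r2 \<mu> a12 a13 a21 a31 :: real
    and u v w :: "real \<Rightarrow> real"
  assumes pos: "r1 > 0" "r2 > 0" "\<mu> > 0" "a12 > 0" "a13 > 0" "a21 > 0" "a31 > 0"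
    and hyp: "a31 \<le> \<mu>"
    and du: "\<And>t. t \<ge> 0 \<Longrightarrow>
      (u has_real_derivative (r1 * u t * (1 - u t) - a12 * u t * v t - a13 * u t * w t)) (at t within {0..})"
    and dv: "\<And>t. t \<ge> 0 \<Longrightarrow>
      (v has_real_derivative (r2 * v t * (1 - v t) + a21 * u t * v t)) (at t within {0..})"
    and dw: "\<And>t. t \<ge> 0 \<Longrightarrow>
      (w has_real_derivative (- \<mu> * w t + a31 * u t * w t)) (at t within {0..})"
    and init: "u 0 > 0" "v 0 > 0" "w 0 > 0"
  shows "(w \<longlongrightarrow> 0) at_top"
proof -
  interpret three_species_system r1 r2 \<mu> a12 a13 a21 a31 u v w
    using pos du dv dw init by unfold_locales
  obtain \<theta> N where "\<theta> < 1" and u_le: "\<And>t. N \<le> t \<Longrightarrow> u t \<le> \<theta>"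
    using u_eventually_below unfolding eventually_at_top_linorder by blast
  define t1 where "t1 = max 0 N"
  show ?thesis
  proof (rule tendsto_zero_of_deriv_le_neg_mult[of t1 "{0..}" w _ "\<mu> * (1 - \<theta>)"])
    fix t assume "t1 \<le> t"
    then have "0 \<le> t" "N \<le> t" by (auto simp: t1_def)
    have "a31 * u t \<le> \<mu> * u t"
      using hyp uvw_pos[OF \<open>0 \<le> t\<close>] by (simp add: mult_right_mono)
    also have "\<dots> \<le> \<mu> * \<theta>"
      using u_le[OF \<open>N \<le> t\<close>] pos by simp
    finally have "w t * (a31 * u t - \<mu>) \<le> w t * (\<mu> * \<theta> - \<mu>)"
      using uvw_pos[OF \<open>0 \<le> t\<close>] by (simp add: mult_left_mono)
    then show "- \<mu> * w t + a31 * u t * w t \<le> - (\<mu> * (1 - \<theta>)) * w t"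
      by (simp add: algebra_simps)
    show "0 \<le> w t" using uvw_pos[OF \<open>0 \<le> t\<close>] by simp
  qed (use dw pos \<open>\<theta> < 1\<close> in \<open>auto simp: t1_def\<close>)
qed

end
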